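(* Let $\mathbb{F}$ be any field and let $q\in\mathbb{F}$ with $q\neq 0$. Then the tensor rank of $\langle 2,2,2\rangle_q$ over $\mathbb{F}$ is at least $7$.
   Context: Let $e_{ij}$ ($i,j\in\{1,2\}$) be the standard basis of $\mathbb{F}^{2\times 2}$ and $\langle 2,2,2\rangle=\sum_{i,j,k\in\{1,2\}} e_{ij}\otimes e_{jk}\otimes e_{ki}$. For $q\in\mathbb{F}$, the perturbed matrix multiplication tensor is $\langle 2,2,2\rangle_q=\langle 2,2,2\rangle+(q-1)\,e_{11}\otimes e_{11}\otimes e_{11}$, i.e. $\langle 2,2,2\rangle$ with the coefficient of $e_{11}\otimes e_{11}\otimes e_{11}$ replaced by $q$. Tensor rank is the minimal number of simple tensors $v_1\otimes v_2\otimes v_3$ summing to the tensor. *)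

theory Defs
  imports Main
begin

text \<open>Basis index set of F^{2x2}: pairs (i,j) with i,j in {1,2}; e_{ij} is the basis
  vector at index (i,j). A tensor in F^{2x2} (x) F^{2x2} (x) F^{2x2} is given by its
  coordinates T a b c for a,b,c in idx2 (values outside idx2 are irrelevant).\<close>

definition idx2 :: "(nat \<times> nat) set" where
  "idx2 = {1,2} \<times> {1,2}"

definition sum_of_simple :: "((nat \<times> nat) \<Rightarrow> (nat \<times> nat) \<Rightarrow> (nat \<times> nat) \<Rightarrow> 'a::field) \<Rightarrow> nat \<Rightarrow> bool" where
  "sum_of_simple T r \<longleftrightarrow>
     (\<exists>u v w :: nat \<Rightarrow> (nat \<times> nat) \<Rightarrow> 'a.
        \<forall>a\<in>idx2. \<forall>b\<in>idx2. \<forall>c\<in>idx2. T a b c = (\<Sum>l<r. u l a * v l b * w l c))"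

definition tensor_rank :: "((nat \<times> nat) \<Rightarrow> (nat \<times> nat) \<Rightarrow> (nat \<times> nat) \<Rightarrow> 'a::field) \<Rightarrow> nat" where
  "tensor_rank T = (LEAST r. sum_of_simple T r)"

text \<open>Coordinates of <2,2,2> = sum_{i,j,k} e_ij (x) e_jk (x) e_ki.\<close>
definition mm222 :: "(nat \<times> nat) \<Rightarrow> (nat \<times> nat) \<Rightarrow> (nat \<times> nat) \<Rightarrow> 'a::field" where
  "mm222 a b c = (if snd a = fst b \<and> snd b = fst c \<and> snd c = fst a then 1 else 0)"

definition mm222q :: "'a::field \<Rightarrow> (nat \<times> nat) \<Rightarrow> (nat \<times> nat) \<Rightarrow> (nat \<times> nat) \<Rightarrow> 'a" where
  "mm222q q a b c = mm222 a b c + (if a = (1,1) \<and> b = (1,1) \<and> c = (1,1) then q - 1 else 0)"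

end

theory Submission
  imports Defs
begin

text \<open>Suppose the tensor were a sum of six simple tensors u l \<otimes> v l \<otimes> w l. Contracting the
  third factor against a 2 by 2 matrix M gives a block diagonal 4 by 4 matrix whose two diagonal
  blocks are the transpose of M, the first one with its (1,1) entry scaled by q \<noteq> 0. Hence no
  nonzero M is annihilated by five of the w l, and a finer analysis shows that no two-dimensional
  space of matrices is annihilated by three of them; so any three w l are linearly independent.

  Consider the terms contributing to the off-diagonal block (1,2) of the contraction: their rank one
  contributions satisfy every linear relation among the w l. Using the independence of triples and
  the fact that each diagonal block needs two terms in every direction, this set of terms is either
  empty or has five elements, any four of them having dependent w l. The same holds for the block
  (2,1). A term contributing to both diagonal blocks lies in both sets, which therefore share at
  least three terms; a matrix annihilated by their three w l is annihilated by all but one term,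
  which is impossible.\<close>

section \<open>Linear algebra in dimensions two and four\<close>

lemma homogeneous_system_nonzero_solution:
  fixes A :: "'i \<Rightarrow> 'j \<Rightarrow> 'a::field"
  assumes "finite S" "finite R" "card R < card S"
  shows "\<exists>x. (\<exists>j\<in>S. x j \<noteq> 0) \<and> (\<forall>i\<in>R. (\<Sum>j\<in>S. A i j * x j) = 0)"
  using assms
proof (induction S arbitrary: R A rule: finite_induct)
  case empty
  then show ?case by simp
next
  case (insert s S)
  show ?case
  proof (cases "\<forall>i\<in>R. A i s = 0")
    case True
    let ?x = "\<lambda>j. if j = s then (1::'a) else 0"
    have "\<forall>i\<in>R. (\<Sum>j\<in>insert s S. A i j * ?x j) = 0"
      using True insert(1,2) by (auto intro!: sum.neutral)
    then show ?thesis by (intro exI[of _ ?x]) auto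
  next
    case False
    then obtain r where r: "r \<in> R" "A r s \<noteq> 0" by auto
    have card: "card (R - {r}) < card S"
      using insert r card_gt_0_iff[of R] by (auto simp: card_Diff_singleton)
    \<comment> \<open>Eliminate the unknown s with row r, solve the smaller system, then back-substitute.\<close>
    define B where "B i j = A i j - (A i s / A r s) * A r j" for i j
    obtain x' where x': "\<exists>j\<in>S. x' j \<noteq> 0" "\<forall>i\<in>R - {r}. (\<Sum>j\<in>S. B i j * x' j) = 0"
      using insert.IH[of "R - {r}" B] insert.prems card by blast
    define T where "T = (\<Sum>j\<in>S. A r j * x' j)"
    define x where "x j = (if j = s then - T / A r s else x' j)" for j
    have split: "(\<Sum>j\<in>insert s S. A i j * x j) = (\<Sum>j\<in>S. A i j * x' j) - A i s * T / A r s" for i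
    proof -
      have "(\<Sum>j\<in>S. A i j * x j) = (\<Sum>j\<in>S. A i j * x' j)"
        using insert(2) by (intro sum.cong) (auto simp: x_def)
      then show ?thesis using insert(1,2) by (simp add: x_def)
    qed
    have "(\<Sum>j\<in>insert s S. A i j * x j) = 0" if "i \<in> R" for i
    proof (cases "i = r")
      case True
      then show ?thesis unfolding split using r(2) by (simp add: T_def)
    next
      case False
      then have "(\<Sum>j\<in>S. B i j * x' j) = 0" using x'(2) that by auto
      then have "(\<Sum>j\<in>S. A i j * x' j) - (A i s / A r s) * T = 0"
        unfolding B_def T_def by (simp add: algebra_simps sum_subtractf sum_distrib_left)
      then show ?thesis unfolding split using r(2) by (simp add: field_simps)
    qed
    moreover have "\<exists>j\<in>insert s S. x j \<noteq> 0"
      using x'(1) insert(2) by (auto simp: x_def)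
    ultimately show ?thesis by blast
  qed
qed

lemma det2_eq_0_imp_kernel:
  fixes a1 a2 b1 b2 :: "'a::field"
  assumes "a1 * b2 - a2 * b1 = 0"
  shows "\<exists>s t. (s \<noteq> 0 \<or> t \<noteq> 0) \<and> s * a1 + t * a2 = 0 \<and> s * b1 + t * b2 = 0"
proof (cases "a1 \<noteq> 0 \<or> a2 \<noteq> 0")
  case True
  then show ?thesis using assms by (intro exI[of _ a2] exI[of _ "-a1"]) (auto simp: algebra_simps)
next
  case False
  show ?thesis
  proof (cases "b1 \<noteq> 0 \<or> b2 \<noteq> 0")
    case True
    then show ?thesis using False by (intro exI[of _ b2] exI[of _ "-b1"]) (auto simp: algebra_simps)
  next
    case False
    then show ?thesis using \<open>\<not> (a1 \<noteq> 0 \<or> a2 \<noteq> 0)\<close> by (intro exI[of _ 1] exI[of _ 0]) auto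
  qed
qed

lemma det2_neq_0_imp_solvable:
  fixes a1 a2 b1 b2 e1 e2 :: "'a::field"
  assumes "a1 * b2 - a2 * b1 \<noteq> 0"
  shows "\<exists>s t. s * a1 + t * a2 = e1 \<and> s * b1 + t * b2 = e2"
proof -
  define D where "D = a1 * b2 - a2 * b1"
  have "(e1 * b2 - e2 * a2) * a1 + (e2 * a1 - e1 * b1) * a2 = e1 * D"
    "(e1 * b2 - e2 * a2) * b1 + (e2 * a1 - e1 * b1) * b2 = e2 * D"
    unfolding D_def by (simp_all add: algebra_simps)
  then have "((e1 * b2 - e2 * a2) / D) * a1 + ((e2 * a1 - e1 * b1) / D) * a2 = e1"
    "((e1 * b2 - e2 * a2) / D) * b1 + ((e2 * a1 - e1 * b1) / D) * b2 = e2"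
    using assms unfolding D_def[symmetric] by (simp_all add: field_simps)
  then show ?thesis by blast
qed

lemma finite_idx2 [simp]: "finite idx2"
  by (simp add: idx2_def)

lemma sum_idx2: "(\<Sum>c\<in>idx2. f c) = f (1,1) + f (1,2) + f (2,1) + f (2,2)"
  by (simp add: idx2_def add_ac)

lemma swap_idx2 [simp]: "prod.swap c \<in> idx2 \<longleftrightarrow> c \<in> idx2"
  by (cases c) (auto simp: idx2_def)

lemma card_idx2: "card idx2 = 4"
  by (simp add: idx2_def)

lemma idx2_common_kernel:
  fixes f :: "'i \<Rightarrow> nat \<times> nat \<Rightarrow> 'a::field"
  assumes "finite R" "card R < 4"
  shows "\<exists>M. (\<exists>c\<in>idx2. M c \<noteq> 0) \<and> (\<forall>i\<in>R. (\<Sum>c\<in>idx2. f i c * M c) = 0)"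
  using homogeneous_system_nonzero_solution[of idx2 R f] assms by (simp add: card_idx2)

lemma idx2_vectors_dependent:
  fixes g :: "'i \<Rightarrow> nat \<times> nat \<Rightarrow> 'a::field"
  assumes "finite S" "4 < card S"
  shows "\<exists>lam. (\<exists>i\<in>S. lam i \<noteq> 0) \<and> (\<forall>c\<in>idx2. (\<Sum>i\<in>S. lam i * g i c) = 0)"
  using homogeneous_system_nonzero_solution[of S idx2 "\<lambda>c i. g i c"] assms
  by (simp add: card_idx2 mult.commute)

lemma idx2_independent_pencil_in_kernel:
  fixes f :: "'i \<Rightarrow> nat \<times> nat \<Rightarrow> 'a::field"
  assumes "finite R" "card R \<le> 2"
  shows "\<exists>M1 M2. (\<forall>s t. (\<forall>c\<in>idx2. s * M1 c + t * M2 c = 0) \<longrightarrow> s = 0 \<and> t = 0) \<and>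
    (\<forall>i\<in>R. (\<Sum>c\<in>idx2. f i c * M1 c) = 0 \<and> (\<Sum>c\<in>idx2. f i c * M2 c) = 0)"
proof -
  obtain M1 where M1: "\<exists>c\<in>idx2. M1 c \<noteq> 0" "\<forall>i\<in>R. (\<Sum>c\<in>idx2. f i c * M1 c) = 0"
    using idx2_common_kernel[of R f] assms by auto
  then obtain c0 where c0: "c0 \<in> idx2" "M1 c0 \<noteq> 0" by blast
  \<comment> \<open>A second kernel vector, additionally vanishing at c0, is independent of M1.\<close>
  define f' where "f' = case_option (\<lambda>c. if c = c0 then 1 else 0) f"
  have "card (insert None (Some ` R)) < 4"
    using assms by (simp add: card_image)
  then obtain M2 where M2: "\<exists>c\<in>idx2. M2 c \<noteq> 0"
      "\<forall>i\<in>insert None (Some ` R). (\<Sum>c\<in>idx2. f' i c * M2 c) = 0"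
    using idx2_common_kernel[of "insert None (Some ` R)" f'] assms(1) by blast
  have "(\<Sum>c\<in>idx2. f' None c * M2 c) = (\<Sum>c\<in>idx2. if c = c0 then M2 c else 0)"
    by (rule sum.cong) (simp_all add: f'_def)
  also have "\<dots> = M2 c0"
    using c0(1) by simp
  finally have M2c0: "M2 c0 = 0"
    using M2(2) by simp
  have "s = 0 \<and> t = 0" if st: "\<forall>c\<in>idx2. s * M1 c + t * M2 c = 0" for s t
  proof -
    have "s = 0" using st c0 M2c0 by force
    moreover obtain c where "c \<in> idx2" "M2 c \<noteq> 0" using M2(1) by blast
    ultimately show ?thesis using st by force
  qed
  moreover have "\<forall>i\<in>R. (\<Sum>c\<in>idx2. f i c * M2 c) = 0"
    using M2(2) by (simp add: f'_def)
  ultimately show ?thesis using M1(2) by blast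
qed

lemma kernel_2x3_nonzero_minors:
  fixes a1 a2 b1 b2 c1 c2 :: "'a::field"
  assumes "a1 * b2 - a2 * b1 \<noteq> 0" "a1 * c2 - a2 * c1 \<noteq> 0" "b1 * c2 - b2 * c1 \<noteq> 0"
  shows "\<exists>\<kappa>b \<kappa>c. \<kappa>b \<noteq> 0 \<and> \<kappa>c \<noteq> 0 \<and>
    (\<forall>mx my mz. a1 * mx + b1 * my + c1 * mz = 0 \<longrightarrow> a2 * mx + b2 * my + c2 * mz = 0 \<longrightarrow>
       my = \<kappa>b * mx \<and> mz = \<kappa>c * mx)"
proof (intro exI conjI allI impI)
  fix mx my mz
  assume e1: "a1 * mx + b1 * my + c1 * mz = 0" and e2: "a2 * mx + b2 * my + c2 * mz = 0"
  have "c2 * (a1 * mx + b1 * my + c1 * mz) - c1 * (a2 * mx + b2 * my + c2 * mz) = 0"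
    "b2 * (a1 * mx + b1 * my + c1 * mz) - b1 * (a2 * mx + b2 * my + c2 * mz) = 0"
    using e1 e2 by simp_all
  then have "(a1 * c2 - a2 * c1) * mx + (b1 * c2 - b2 * c1) * my = 0"
    "(a1 * b2 - a2 * b1) * mx - (b1 * c2 - b2 * c1) * mz = 0"
    by (simp_all add: algebra_simps)
  then show "my = - ((a1 * c2 - a2 * c1) / (b1 * c2 - b2 * c1)) * mx"
    "mz = ((a1 * b2 - a2 * b1) / (b1 * c2 - b2 * c1)) * mx"
    using assms(3) by (simp_all add: field_simps)
qed (use assms in simp_all)

lemma rank_one_factors_proportional:
  fixes A B C D :: "nat \<Rightarrow> 'a::field"
  assumes eq: "\<And>i k. i \<in> {1,2} \<Longrightarrow> k \<in> {1,2} \<Longrightarrow> A i * B k = \<kappa> * (C i * D k)"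
    and "\<kappa> \<noteq> 0" "i0 \<in> {1,2}" "k0 \<in> {1,2}" "C i0 \<noteq> 0" "D k0 \<noteq> 0"
  shows "\<exists>d e. (\<forall>i\<in>{1,2}. A i = d * C i) \<and> (\<forall>k\<in>{1,2}. B k = e * D k)"
proof (intro exI conjI ballI)
  have "A i0 * B k0 \<noteq> 0" using eq assms by simp
  then have "A i0 \<noteq> 0" "B k0 \<noteq> 0" by auto
  show "A i = (\<kappa> * D k0 / B k0) * C i" if "i \<in> {1,2}" for i
    using eq[OF that assms(4)] \<open>B k0 \<noteq> 0\<close> by (simp add: field_simps)
  show "B k = (\<kappa> * C i0 / A i0) * D k" if "k \<in> {1,2}" for k
    using eq[OF assms(3) that] \<open>A i0 \<noteq> 0\<close> by (simp add: field_simps)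
qed

lemma superset_with_card:
  assumes "finite U" "A \<subseteq> U" "card A \<le> n" "n \<le> card U"
  obtains K where "A \<subseteq> K" "K \<subseteq> U" "card K = n"
proof -
  have finA: "finite A" using assms(1,2) finite_subset by blast
  have "n - card A \<le> card (U - A)"
    using assms finA by (simp add: card_Diff_subset)
  then obtain C where C: "C \<subseteq> U - A" "card C = n - card A" "finite C"
    by (rule obtain_subset_with_card_n)
  have "card (A \<union> C) = n"
    using C assms(3) finA by (subst card_Un_disjoint) auto
  then show ?thesis using that C(1) assms(2) by blast
qed

lemma all_but_one_in:
  assumes "A \<subseteq> {..<n}" "n \<le> Suc (card A)" "0 < n"
  obtains f where "f < n" "\<And>l. l < n \<Longrightarrow> l \<noteq> f \<Longrightarrow> l \<in> A"
proof (cases "{..<n} - A = {}")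
  case True
  then show ?thesis using that[of 0] assms(3) by blast
next
  case False
  then obtain f where f: "f \<in> {..<n} - A" by blast
  have "card ({..<n} - A) = n - card A"
    using assms(1) by (simp add: card_Diff_subset finite_subset)
  then have "card ({..<n} - A) \<le> 1" using assms(2) by simp
  then have "{..<n} - A = {f}"
    using f card_le_Suc0_iff_eq[of "{..<n} - A"] by auto
  then show ?thesis using that[of f] f by blast
qed

lemma card_disjoint3_le:
  assumes "A \<subseteq> {..<n}" "B \<subseteq> {..<n}" "D \<subseteq> {..<n}"
    and "A \<inter> B = {}" "A \<inter> D = {}" "B \<inter> D = {}"
  shows "card A + card B + card D \<le> n"
proof -
  have fin: "finite A" "finite B" "finite D" using assms(1-3) finite_subset by blast+
  have "card A + card B + card D = card (A \<union> B \<union> D)"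
    using assms(4-6) fin by (simp add: card_Un_disjoint Int_Un_distrib2)
  also have "\<dots> \<le> card {..<n}" using assms(1-3) by (intro card_mono) auto
  finally show ?thesis by simp
qed

definition nonzero2 :: "(nat \<Rightarrow> 'a::zero) \<Rightarrow> bool" where
  "nonzero2 x \<longleftrightarrow> x 1 \<noteq> 0 \<or> x 2 \<noteq> 0"

definition dot2 :: "(nat \<Rightarrow> 'a::comm_ring) \<Rightarrow> (nat \<Rightarrow> 'a) \<Rightarrow> 'a" where
  "dot2 x y = x 1 * y 1 + x 2 * y 2"

lemma dot2_commute: "dot2 x y = dot2 y x"
  unfolding dot2_def by (simp add: mult.commute)

lemma dot2_neq_0_imp_nonzero2: "dot2 x y \<noteq> 0 \<Longrightarrow> nonzero2 x" "dot2 x y \<noteq> 0 \<Longrightarrow> nonzero2 y"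
  unfolding dot2_def nonzero2_def by auto

lemma orthogonal2_exists:
  fixes x :: "nat \<Rightarrow> 'a::field"
  assumes "nonzero2 x"
  shows "nonzero2 (\<lambda>i. if i = 1 then x 2 else - x 1)" "dot2 (\<lambda>i. if i = 1 then x 2 else - x 1) x = 0"
  using assms unfolding nonzero2_def dot2_def by (auto simp: mult.commute)

lemma dot2_eq_0_from_rank_one_combination:
  fixes A B X Y X' Y' h :: "nat \<Rightarrow> 'a::field"
  assumes comb: "\<And>i k. i \<in> {1,2} \<Longrightarrow> k \<in> {1,2} \<Longrightarrow> A i * B k = a * (X i * Y k) + b * (X' i * Y' k)"
    and "dot2 h X = 0" "dot2 h X' = 0" "nonzero2 B"
  shows "dot2 h A = 0"
proof -
  obtain k where k: "k \<in> {1,2}" "B k \<noteq> 0" using assms(4) by (auto simp: nonzero2_def)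
  have "dot2 h A * B k = h 1 * (A 1 * B k) + h 2 * (A 2 * B k)"
    by (simp add: dot2_def algebra_simps)
  also have "\<dots> = h 1 * (a * (X 1 * Y k) + b * (X' 1 * Y' k)) + h 2 * (a * (X 2 * Y k) + b * (X' 2 * Y' k))"
    using comb[of 1 k] comb[of 2 k] k(1) by simp
  also have "\<dots> = a * Y k * dot2 h X + b * Y' k * dot2 h X'"
    by (simp add: dot2_def algebra_simps)
  finally show ?thesis using assms(2,3) k(2) by simp
qed

lemma det2_rank_one_combination:
  fixes X Y X' Y' :: "nat \<Rightarrow> 'a::comm_ring" and P :: "nat \<Rightarrow> nat \<Rightarrow> 'a" and a b :: 'a
  assumes "\<And>i k. i \<in> {1,2} \<Longrightarrow> k \<in> {1,2} \<Longrightarrow> P i k = a * (X i * Y k) + b * (X' i * Y' k)"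
  shows "P 1 1 * P 2 2 - P 1 2 * P 2 1 = a * b * ((X 1 * X' 2 - X 2 * X' 1) * (Y 1 * Y' 2 - Y 2 * Y' 1))"
  using assms[of 1 1] assms[of 1 2] assms[of 2 1] assms[of 2 2] by (simp add: algebra_simps)

text \<open>A single term only produces multiples of the vector A s, not both unit vectors.\<close>

lemma two_terms_needed:
  fixes W :: "nat \<Rightarrow> 'm \<Rightarrow> 'a::field" and A :: "nat \<Rightarrow> nat \<Rightarrow> 'a" and B :: "nat \<Rightarrow> 'a"
  assumes sum: "\<And>M i. i \<in> {1,2} \<Longrightarrow> (\<Sum>l<n. W l M * A l i * B l) = T M i"
    and "T M1 1 = 1" "T M1 2 = 0" "T M2 1 = 0" "T M2 2 = 1"
  shows "2 \<le> card {l. l < n \<and> nonzero2 (A l) \<and> B l \<noteq> 0}"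
proof (rule ccontr)
  let ?S = "{l. l < n \<and> nonzero2 (A l) \<and> B l \<noteq> 0}"
  assume "\<not> 2 \<le> card ?S"
  then have "\<forall>l1\<in>?S. \<forall>l2\<in>?S. l1 = l2"
    using card_le_Suc0_iff_eq[of ?S] by simp
  then obtain s where "?S = {} \<or> ?S = {s}"
    by (cases "?S = {}") blast+
  moreover have T: "T M i = (\<Sum>l\<in>?S. W l M * A l i * B l)" if "i \<in> {1,2}" for M i
    unfolding sum[OF that, symmetric] using that
    by (intro sum.mono_neutral_right) (auto simp: nonzero2_def)
  ultimately consider "\<And>M i. i \<in> {1,2} \<Longrightarrow> T M i = 0"
    | "\<And>M i. i \<in> {1,2} \<Longrightarrow> T M i = W s M * A s i * B s"
    by force
  then show False
  proof cases
    case 1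
    then show False using assms(2) by simp
  next
    case 2
    then have "W s M1 * A s 1 * B s = 1" "W s M1 * A s 2 * B s = 0" "W s M2 * A s 2 * B s = 1"
      using assms(2-5) by simp_all
    then show False by (metis mult_eq_0_iff mult_zero_right zero_neq_one)
  qed
qed

section \<open>Contracting a six-term decomposition\<close>

text \<open>The trace identity tr(A B C) = tr(B^T A^T C^T).\<close>

lemma mm222q_transpose: "mm222q q (prod.swap b) (prod.swap a) (prod.swap c) = mm222q q a b c"
proof -
  have "(snd (prod.swap b) = fst (prod.swap a) \<and> snd (prod.swap a) = fst (prod.swap c) \<and>
      snd (prod.swap c) = fst (prod.swap b)) \<longleftrightarrow> (snd a = fst b \<and> snd b = fst c \<and> snd c = fst a)"
    by auto
  moreover have "prod.swap x = (1,1) \<longleftrightarrow> x = (1,1)" for x :: "nat \<times> nat"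
    by (cases x) auto
  ultimately show ?thesis
    unfolding mm222q_def mm222_def by (simp only:) auto
qed

locale decomp6 =
  fixes q :: "'a::field" and u v w :: "nat \<Rightarrow> nat \<times> nat \<Rightarrow> 'a"
  assumes q_nonzero: "q \<noteq> 0"
    and decomp: "\<And>a b c. a \<in> idx2 \<Longrightarrow> b \<in> idx2 \<Longrightarrow> c \<in> idx2 \<Longrightarrow>
      mm222q q a b c = (\<Sum>l<6. u l a * v l b * w l c)"
begin

lemma decomp6_transpose:
  "decomp6 q (\<lambda>l. v l \<circ> prod.swap) (\<lambda>l. u l \<circ> prod.swap) (\<lambda>l. w l \<circ> prod.swap)"
proof
  show "q \<noteq> 0" by (rule q_nonzero)
  fix a b c assume "a \<in> idx2" "b \<in> idx2" "c \<in> idx2"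
  then show "mm222q q a b c =
      (\<Sum>l<6. (v l \<circ> prod.swap) a * (u l \<circ> prod.swap) b * (w l \<circ> prod.swap) c)"
    using decomp[of "prod.swap b" "prod.swap a" "prod.swap c"] mm222q_transpose[of q b a c]
    by (simp add: mult_ac)
qed

definition wdot :: "nat \<Rightarrow> (nat \<times> nat \<Rightarrow> 'a) \<Rightarrow> 'a" where
  "wdot l M = (\<Sum>c\<in>idx2. w l c * M c)"

text \<open>Contracting the third factor of the tensor against M gives a 4 by 4 matrix with rows (i,j)
  and columns (j',k). It is block diagonal in (j,j'), and slice j M is its j-th diagonal block:
  the transpose of M, with the (1,1) entry of the first block multiplied by q.\<close>

definition slice :: "nat \<Rightarrow> (nat \<times> nat \<Rightarrow> 'a) \<Rightarrow> nat \<Rightarrow> nat \<Rightarrow> 'a" where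
  "slice j M i k = M (k,i) + (if j = 1 \<and> i = 1 \<and> k = 1 then (q - 1) * M (1,1) else 0)"

lemma contract_third_factor:
  assumes "i \<in> {1,2}" "k \<in> {1,2}" "j \<in> {1,2}" "j' \<in> {1,2}"
  shows "(\<Sum>l<6. u l (i,j) * v l (j',k) * wdot l M) = (if j = j' then slice j M i k else 0)"
proof -
  have "(\<Sum>l<6. u l (i,j) * v l (j',k) * wdot l M) =
        (\<Sum>c\<in>idx2. M c * (\<Sum>l<6. u l (i,j) * v l (j',k) * w l c))"
    unfolding wdot_def
    by (simp add: sum_distrib_left sum_distrib_right mult_ac sum.swap[of _ idx2])
  also have "\<dots> = (\<Sum>c\<in>idx2. M c * mm222q q (i,j) (j',k) c)"
  proof -
    have "(i,j) \<in> idx2" "(j',k) \<in> idx2" using assms by (auto simp: idx2_def)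
    then show ?thesis using decomp by (intro sum.cong refl) simp
  qed
  also have "\<dots> = (if j = j' then slice j M i k else 0)"
    using assms unfolding sum_idx2 mm222q_def mm222_def slice_def
    by (auto simp: algebra_simps)
  finally show ?thesis .
qed

lemma offdiag_terms_cancel:
  assumes "i \<in> {1,2}" "k \<in> {1,2}" "j \<in> {1,2}" "j' \<in> {1,2}" "j \<noteq> j'" "c \<in> idx2"
  shows "(\<Sum>l<6. u l (i,j) * v l (j',k) * w l c) = 0"
  using decomp[of "(i,j)" "(j',k)" c] assms by (auto simp: idx2_def mm222q_def mm222_def)

lemma wdot_lincomb: "wdot l (\<lambda>c. s * M1 c + t * M2 c) = s * wdot l M1 + t * wdot l M2"
  unfolding wdot_def by (simp add: sum.distrib sum_distrib_left algebra_simps)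

lemma slice_eq_0_imp_eq_0:
  assumes "j \<in> {1,2}" "\<forall>i\<in>{1,2}. \<forall>k\<in>{1,2}. slice j N i k = 0"
  shows "\<forall>c\<in>idx2. N c = 0"
proof -
  have "N (1,2) = 0" "N (2,1) = 0" "N (2,2) = 0"
    using assms(2)[rule_format, of 2 1] assms(2)[rule_format, of 1 2] assms(2)[rule_format, of 2 2]
    by (auto simp: slice_def)
  moreover have "(if j = 1 then q else 1) * N (1,1) = 0"
    using assms(1) assms(2)[rule_format, of 1 1] by (auto simp: slice_def algebra_simps)
  then have "N (1,1) = 0" using q_nonzero by (simp split: if_splits)
  ultimately show ?thesis by (auto simp: idx2_def)
qed

text \<open>Both diagonal blocks of the contraction against a nonzero M are nonzero, so it has rank at
  least two and cannot come from a single term.\<close>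

lemma kernel_of_five_trivial:
  assumes nonzero: "\<exists>c\<in>idx2. M c \<noteq> 0" and "f < 6"
    and others: "\<And>l. l < 6 \<Longrightarrow> l \<noteq> f \<Longrightarrow> wdot l M = 0"
  shows False
proof -
  have single: "u f (i,j) * v f (j',k) * wdot f M = (if j = j' then slice j M i k else 0)"
    if "i \<in> {1,2}" "k \<in> {1,2}" "j \<in> {1,2}" "j' \<in> {1,2}" for i k j j'
  proof -
    have "(\<Sum>l<6. u l (i,j) * v l (j',k) * wdot l M) = (\<Sum>l\<in>{f}. u l (i,j) * v l (j',k) * wdot l M)"
      using \<open>f < 6\<close> others by (intro sum.mono_neutral_right) auto
    then show ?thesis using contract_third_factor[OF that] by simp
  qed
  have "\<exists>i\<in>{1,2}. \<exists>k\<in>{1,2}. slice j M i k \<noteq> 0" if "j \<in> {1,2}" for j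
    using slice_eq_0_imp_eq_0[OF that] nonzero by auto
  from this[of 1] this[of 2] obtain i1 k1 i2 k2 where ik: "i1 \<in> {1,2}" "k1 \<in> {1,2}"
      "slice 1 M i1 k1 \<noteq> 0" "i2 \<in> {1,2}" "k2 \<in> {1,2}" "slice 2 M i2 k2 \<noteq> 0"
    by auto
  have "u f (i1,1) * v f (1,k1) * wdot f M \<noteq> 0"
    using single[of i1 k1 1 1] ik(1-3) by simp
  moreover have "u f (i2,2) * v f (2,k2) * wdot f M \<noteq> 0"
    using single[of i2 k2 2 2] ik(4-6) by simp
  moreover have "u f (i1,1) * v f (2,k2) * wdot f M = 0"
    using single[of i1 k2 1 2] ik(1,5) by simp
  ultimately show False by simp
qed

definition active :: "nat \<Rightarrow> nat \<Rightarrow> bool" where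
  "active j l \<longleftrightarrow> (\<exists>i\<in>{1,2}. u l (i,j) \<noteq> 0) \<and> (\<exists>k\<in>{1,2}. v l (j,k) \<noteq> 0)"

text \<open>X would have to be proportional to both unit vectors.\<close>

lemma slice1_not_rank_one:
  assumes "k0 \<in> {1,2}" "Y k0 \<noteq> 0"
    and rank_one: "\<And>i0. i0 \<in> {1,2} \<Longrightarrow>
      \<exists>r. \<forall>i\<in>{1,2}. \<forall>k\<in>{1,2}. slice 1 (\<lambda>(k',i'). if i' = i0 then Y k' else 0) i k = X i * r k"
  shows False
proof -
  obtain r2 where r2: "\<forall>i\<in>{1,2}. \<forall>k\<in>{1,2}. slice 1 (\<lambda>(k',i'). if i' = 2 then Y k' else 0) i k = X i * r2 k"
    using rank_one[of 2] by auto
  then have "X 2 * r2 k0 = Y k0" "X 1 * r2 k0 = 0"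
    using assms(1) by (auto simp: slice_def)
  then have "X 2 \<noteq> 0" "X 1 = 0" using assms(2) by auto
  obtain r1 where r1: "\<forall>i\<in>{1,2}. \<forall>k\<in>{1,2}. slice 1 (\<lambda>(k',i'). if i' = 1 then Y k' else 0) i k = X i * r1 k"
    using rank_one[of 1] by auto
  then have "X 2 * r1 k = 0" if "k \<in> {1,2}" for k
    using that by (auto simp: slice_def)
  then have "r1 k = 0" if "k \<in> {1,2}" for k
    using that \<open>X 2 \<noteq> 0\<close> by simp
  then have "q * Y 1 = 0" "Y 2 = 0"
    using r1 by (auto simp: slice_def algebra_simps)
  then show False using assms q_nonzero by auto
qed

end

section \<open>Pencils annihilated by all but three terms\<close>

locale three_term_pencil = decomp6 +
  fixes M1 M2 :: "nat \<times> nat \<Rightarrow> 'a" and x y z :: nat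
  assumes pencil_independent: "\<And>s t. \<forall>c\<in>idx2. s * M1 c + t * M2 c = 0 \<Longrightarrow> s = 0 \<and> t = 0"
    and xyz: "x < 6" "y < 6" "z < 6" "x \<noteq> y" "y \<noteq> z" "x \<noteq> z"
    and vanish_outside: "\<And>l. l < 6 \<Longrightarrow> l \<notin> {x,y,z} \<Longrightarrow> wdot l M1 = 0 \<and> wdot l M2 = 0"
begin

definition pencil :: "'a \<Rightarrow> 'a \<Rightarrow> nat \<times> nat \<Rightarrow> 'a" where
  "pencil s t c = s * M1 c + t * M2 c"

lemma wdot_pencil: "wdot l (pencil s t) = s * wdot l M1 + t * wdot l M2"
  unfolding pencil_def by (rule wdot_lincomb)

lemma sum_xyz: "(\<Sum>l\<in>{x,y,z}. g l) = g x + g y + g z"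
  using xyz by (simp add: add_ac)

lemma contract_pencil:
  assumes "i \<in> {1,2}" "k \<in> {1,2}" "j \<in> {1,2}" "j' \<in> {1,2}"
  shows "(\<Sum>l\<in>{x,y,z}. u l (i,j) * v l (j',k) * wdot l (pencil s t)) =
    (if j = j' then slice j (pencil s t) i k else 0)"
proof -
  have "(\<Sum>l<6. u l (i,j) * v l (j',k) * wdot l (pencil s t)) =
      (\<Sum>l\<in>{x,y,z}. u l (i,j) * v l (j',k) * wdot l (pencil s t))"
    using xyz vanish_outside by (intro sum.mono_neutral_right) (auto simp: wdot_pencil)
  then show ?thesis using contract_third_factor[OF assms] by simp
qed

lemma pencil_minor_nonzero:
  assumes "a \<in> {x,y,z}" "b \<in> {x,y,z}" "a \<noteq> b"
  shows "wdot a M1 * wdot b M2 - wdot a M2 * wdot b M1 \<noteq> 0"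
proof
  assume "wdot a M1 * wdot b M2 - wdot a M2 * wdot b M1 = 0"
  then obtain s t where st: "s \<noteq> 0 \<or> t \<noteq> 0" "wdot a (pencil s t) = 0" "wdot b (pencil s t) = 0"
    using det2_eq_0_imp_kernel unfolding wdot_pencil by blast
  obtain f where f: "f \<in> {x,y,z}" "f \<noteq> a" "f \<noteq> b"
    using xyz assms by auto
  have "wdot l (pencil s t) = 0" if "l < 6" "l \<noteq> f" for l
  proof (cases "l \<in> {x,y,z}")
    case True
    then have "l = a \<or> l = b" using f assms that(2) by auto
    then show ?thesis using st(2,3) by auto
  next
    case False
    then show ?thesis using vanish_outside[OF that(1)] by (simp add: wdot_pencil)
  qed
  moreover have "\<exists>c\<in>idx2. pencil s t c \<noteq> 0"
    using pencil_independent[of s t] st(1) unfolding pencil_def by blast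
  ultimately show False
    using kernel_of_five_trivial[of "pencil s t" f] f xyz by auto
qed

lemma offdiag_proportional:
  "\<exists>\<kappa>y \<kappa>z. \<kappa>y \<noteq> 0 \<and> \<kappa>z \<noteq> 0 \<and>
    (\<forall>i\<in>{1,2}. \<forall>k\<in>{1,2}. \<forall>j\<in>{1,2}. \<forall>j'\<in>{1,2}. j \<noteq> j' \<longrightarrow>
      u y (i,j) * v y (j',k) = \<kappa>y * (u x (i,j) * v x (j',k)) \<and>
      u z (i,j) * v z (j',k) = \<kappa>z * (u x (i,j) * v x (j',k)))"
proof -
  have "wdot x M1 * wdot y M2 - wdot x M2 * wdot y M1 \<noteq> 0"
    "wdot x M1 * wdot z M2 - wdot x M2 * wdot z M1 \<noteq> 0"
    "wdot y M1 * wdot z M2 - wdot y M2 * wdot z M1 \<noteq> 0"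
    using pencil_minor_nonzero xyz by simp_all
  from kernel_2x3_nonzero_minors[OF this] obtain \<kappa>y \<kappa>z where \<kappa>: "\<kappa>y \<noteq> 0" "\<kappa>z \<noteq> 0"
    "\<forall>mx my mz. wdot x M1 * mx + wdot y M1 * my + wdot z M1 * mz = 0 \<longrightarrow>
       wdot x M2 * mx + wdot y M2 * my + wdot z M2 * mz = 0 \<longrightarrow> my = \<kappa>y * mx \<and> mz = \<kappa>z * mx"
    by blast
  have "u y (i,j) * v y (j',k) = \<kappa>y * (u x (i,j) * v x (j',k)) \<and>
      u z (i,j) * v z (j',k) = \<kappa>z * (u x (i,j) * v x (j',k))"
    if "i \<in> {1,2}" "k \<in> {1,2}" "j \<in> {1,2}" "j' \<in> {1,2}" "j \<noteq> j'" for i k j j'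
    using contract_pencil[OF that(1-4), of 1 0] contract_pencil[OF that(1-4), of 0 1] that(5)
    by (intro \<kappa>(3)[rule_format]) (simp_all add: sum_xyz wdot_pencil mult_ac)
  then show ?thesis using \<kappa>(1,2) by blast
qed

lemma pencil_covers_columns:
  assumes cols: "\<And>s t. \<exists>\<zeta>. \<forall>i\<in>{1,2}. \<forall>k\<in>{1,2}. pencil s t (k,i) = Y k * \<zeta> i"
  shows "\<exists>s t. \<forall>i\<in>{1,2}. \<forall>k\<in>{1,2}. pencil s t (k,i) = Y k * \<zeta>' i"
proof -
  obtain \<zeta>1 \<zeta>2 where \<zeta>: "\<forall>i\<in>{1,2}. \<forall>k\<in>{1,2}. M1 (k,i) = Y k * \<zeta>1 i"
      "\<forall>i\<in>{1,2}. \<forall>k\<in>{1,2}. M2 (k,i) = Y k * \<zeta>2 i"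
    using cols[of 1 0] cols[of 0 1] unfolding pencil_def by auto
  have "\<zeta>1 1 * \<zeta>2 2 - \<zeta>2 1 * \<zeta>1 2 \<noteq> 0"
  proof
    assume "\<zeta>1 1 * \<zeta>2 2 - \<zeta>2 1 * \<zeta>1 2 = 0"
    then obtain s t where st: "s \<noteq> 0 \<or> t \<noteq> 0" "s * \<zeta>1 1 + t * \<zeta>2 1 = 0" "s * \<zeta>1 2 + t * \<zeta>2 2 = 0"
      using det2_eq_0_imp_kernel by blast
    have "s * M1 c + t * M2 c = 0" if c: "c \<in> idx2" for c
    proof -
      obtain k i where c: "c = (k,i)" "i \<in> {1,2}" "k \<in> {1,2}" using c unfolding idx2_def by blast
      moreover have "M1 (k,i) = Y k * \<zeta>1 i" "M2 (k,i) = Y k * \<zeta>2 i"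
        using \<zeta> c(2,3) by blast+
      ultimately have "s * M1 c + t * M2 c = Y k * (s * \<zeta>1 i + t * \<zeta>2 i)"
        by (simp add: algebra_simps)
      then show ?thesis using st(2,3) c(2) by auto
    qed
    then show False using pencil_independent st(1) by blast
  qed
  then obtain s t where st: "s * \<zeta>1 1 + t * \<zeta>2 1 = \<zeta>' 1" "s * \<zeta>1 2 + t * \<zeta>2 2 = \<zeta>' 2"
    using det2_neq_0_imp_solvable by blast
  have "pencil s t (k,i) = Y k * \<zeta>' i" if "i \<in> {1,2}" "k \<in> {1,2}" for i k
  proof -
    have "M1 (k,i) = Y k * \<zeta>1 i" "M2 (k,i) = Y k * \<zeta>2 i"
      using \<zeta> that by blast+
    then have "pencil s t (k,i) = Y k * (s * \<zeta>1 i + t * \<zeta>2 i)"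
      by (simp add: pencil_def algebra_simps)
    also have "\<dots> = Y k * \<zeta>' i"
      using st that by auto
    finally show ?thesis .
  qed
  then show ?thesis by blast
qed

lemma offdiag_factors_proportional:
  assumes "i0 \<in> {1,2}" "k0 \<in> {1,2}" "u x (i0,1) \<noteq> 0" "v x (2,k0) \<noteq> 0" "l \<in> {y,z}"
  shows "\<exists>d e. (\<forall>i\<in>{1,2}. u l (i,1) = d * u x (i,1)) \<and> (\<forall>k\<in>{1,2}. v l (2,k) = e * v x (2,k))"
proof -
  obtain \<kappa>y \<kappa>z where \<kappa>: "\<kappa>y \<noteq> 0" "\<kappa>z \<noteq> 0" and proportional:
    "\<forall>i\<in>{1,2}. \<forall>k\<in>{1,2}. \<forall>j\<in>{1,2}. \<forall>j'\<in>{1,2}. j \<noteq> j' \<longrightarrow>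
      u y (i,j) * v y (j',k) = \<kappa>y * (u x (i,j) * v x (j',k)) \<and>
      u z (i,j) * v z (j',k) = \<kappa>z * (u x (i,j) * v x (j',k))"
    using offdiag_proportional by (elim exE conjE) (rule that)
  define \<kappa> where "\<kappa> = (if l = y then \<kappa>y else \<kappa>z)"
  show ?thesis
  proof (rule rank_one_factors_proportional[of _ _ \<kappa> "\<lambda>i. u x (i,1)" "\<lambda>k. v x (2,k)" i0 k0])
    show "u l (i,1) * v l (2,k) = \<kappa> * (u x (i,1) * v x (2,k))" if "i \<in> {1,2}" "k \<in> {1,2}" for i k
      using proportional[rule_format, of i k 1 2] that assms(5) by (auto simp: \<kappa>_def)
  qed (use \<kappa> assms in \<open>auto simp: \<kappa>_def\<close>)
qed

text \<open>If the off-diagonal block (1,2) of term x is nonzero, the three terms share their column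
  factor in the first diagonal block and their row factor in the second one, which the two
  diagonal blocks of the pencil cannot both accommodate.\<close>

lemma offdiag_block_vanishes:
  assumes "i0 \<in> {1,2}" "k0 \<in> {1,2}"
  shows "u x (i0,1) * v x (2,k0) = 0"
proof (rule ccontr)
  assume "u x (i0,1) * v x (2,k0) \<noteq> 0"
  then have nz: "u x (i0,1) \<noteq> 0" "v x (2,k0) \<noteq> 0" by auto
  obtain dy ey where dy: "\<forall>i\<in>{1,2}. u y (i,1) = dy * u x (i,1)"
      and ey: "\<forall>k\<in>{1,2}. v y (2,k) = ey * v x (2,k)"
    using offdiag_factors_proportional[OF assms nz insertI1] by (elim exE conjE) (rule that)
  obtain dz ez where dz: "\<forall>i\<in>{1,2}. u z (i,1) = dz * u x (i,1)"
      and ez: "\<forall>k\<in>{1,2}. v z (2,k) = ez * v x (2,k)"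
    using offdiag_factors_proportional[OF assms nz insertI2[OF singletonI]]
    by (elim exE conjE) (rule that)
  have rows: "\<exists>r. \<forall>i\<in>{1,2}. \<forall>k\<in>{1,2}. slice 1 (pencil s t) i k = u x (i,1) * r k" for s t
  proof (intro exI ballI)
    fix i k :: nat assume ik: "i \<in> {1,2}" "k \<in> {1,2}"
    show "slice 1 (pencil s t) i k = u x (i,1) * (v x (1,k) * wdot x (pencil s t) +
        dy * v y (1,k) * wdot y (pencil s t) + dz * v z (1,k) * wdot z (pencil s t))"
      using contract_pencil[OF ik, of 1 1 s t] dy[rule_format, OF ik(1)] dz[rule_format, OF ik(1)]
      by (simp add: sum_xyz algebra_simps)
  qed
  have cols: "\<exists>\<zeta>. \<forall>i\<in>{1,2}. \<forall>k\<in>{1,2}. pencil s t (k,i) = v x (2,k) * \<zeta> i" for s t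
  proof (intro exI ballI)
    fix i k :: nat assume ik: "i \<in> {1,2}" "k \<in> {1,2}"
    show "pencil s t (k,i) = v x (2,k) * (u x (i,2) * wdot x (pencil s t) +
        ey * u y (i,2) * wdot y (pencil s t) + ez * u z (i,2) * wdot z (pencil s t))"
      using contract_pencil[OF ik, of 2 2 s t] ey[rule_format, OF ik(2)] ez[rule_format, OF ik(2)]
      by (simp add: sum_xyz slice_def algebra_simps)
  qed
  show False
  proof (rule slice1_not_rank_one[of k0 "\<lambda>k. v x (2,k)" "\<lambda>i. u x (i,1)"])
    fix i0' :: nat
    obtain s t where st: "\<forall>i\<in>{1,2}. \<forall>k\<in>{1,2}. pencil s t (k,i) = v x (2,k) * (if i = i0' then 1 else 0)"
      using pencil_covers_columns[OF cols, of "\<lambda>i. if i = i0' then 1 else 0"]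
      by (elim exE) (rule that)
    have "slice 1 (\<lambda>(k',i'). if i' = i0' then v x (2,k') else 0) i k = slice 1 (pencil s t) i k"
      if "i \<in> {1,2}" "k \<in> {1,2}" for i k
      using st that by (auto simp: slice_def)
    then show "\<exists>r. \<forall>i\<in>{1,2}. \<forall>k\<in>{1,2}.
        slice 1 (\<lambda>(k',i'). if i' = i0' then v x (2,k') else 0) i k = u x (i,1) * r k"
      using rows[of s t] by auto
  qed (use assms nz in auto)
qed

lemma block_has_two_active:
  assumes "j \<in> {1,2}" "f \<in> {x,y,z}"
  shows "\<exists>l\<in>{x,y,z}. l \<noteq> f \<and> active j l"
proof (rule ccontr)
  assume "\<not> ?thesis"
  then have inactive: "u l (i,j) * v l (j,k) = 0"
    if "l \<in> {x,y,z}" "l \<noteq> f" "i \<in> {1,2}" "k \<in> {1,2}" for l i k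
    using that unfolding active_def by auto
  have single: "slice j (pencil s t) i k = u f (i,j) * v f (j,k) * (s * wdot f M1 + t * wdot f M2)"
    if "i \<in> {1,2}" "k \<in> {1,2}" for s t i k
  proof -
    have "(\<Sum>l\<in>{x,y,z}. u l (i,j) * v l (j,k) * wdot l (pencil s t)) =
        (\<Sum>l\<in>{f}. u l (i,j) * v l (j,k) * wdot l (pencil s t))"
      using assms inactive that by (intro sum.mono_neutral_right) auto
    then show ?thesis using contract_pencil[OF that assms(1) assms(1)] by (simp add: wdot_pencil)
  qed
  have pencil_zero: "s = 0 \<and> t = 0" if "\<forall>i\<in>{1,2}. \<forall>k\<in>{1,2}. slice j (pencil s t) i k = 0" for s t
    using slice_eq_0_imp_eq_0[OF assms(1) that] pencil_independent unfolding pencil_def by blast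
  have "wdot f M2 = 0 \<and> - wdot f M1 = 0"
    by (rule pencil_zero) (simp add: single algebra_simps)
  then have "(1::'a) = 0 \<and> (0::'a) = 0"
    by (intro pencil_zero) (simp add: single)
  then show False by simp
qed

lemma three_term_pencil_impossible: False
proof -
  obtain \<kappa>y \<kappa>z where proportional:
    "\<forall>i\<in>{1,2}. \<forall>k\<in>{1,2}. \<forall>j\<in>{1,2}. \<forall>j'\<in>{1,2}. j \<noteq> j' \<longrightarrow>
      u y (i,j) * v y (j',k) = \<kappa>y * (u x (i,j) * v x (j',k)) \<and>
      u z (i,j) * v z (j',k) = \<kappa>z * (u x (i,j) * v x (j',k))"
    using offdiag_proportional by (elim exE conjE) (rule that)
  have offdiag: "u l (i,1) * v l (2,k) = 0"
    if "l \<in> {x,y,z}" "i \<in> {1,2}" "k \<in> {1,2}" for l i k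
  proof -
    have "u x (i,1) * v x (2,k) = 0"
      using offdiag_block_vanishes[OF that(2,3)] .
    moreover have "u y (i,1) * v y (2,k) = \<kappa>y * (u x (i,1) * v x (2,k))"
      "u z (i,1) * v z (2,k) = \<kappa>z * (u x (i,1) * v x (2,k))"
      using proportional[rule_format, of i k 1 2] that(2,3) by simp_all
    ultimately show ?thesis using that(1) by auto
  qed
  have one_block: "\<not> (active 1 l \<and> active 2 l)" if "l \<in> {x,y,z}" for l
  proof
    assume "active 1 l \<and> active 2 l"
    then obtain i k where ik: "i \<in> {1,2}" "k \<in> {1,2}" "u l (i,1) \<noteq> 0" "v l (2,k) \<noteq> 0"
      unfolding active_def by blast
    then show False using offdiag[OF that ik(1,2)] by simp
  qed
  have two_active: "active j y \<or> active j z" "active j x \<or> active j z" "active j x \<or> active j y"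
    if "j \<in> {1,2}" for j
    using block_has_two_active[OF that, of x] block_has_two_active[OF that, of y]
      block_has_two_active[OF that, of z] by auto
  have "\<not> (active 1 x \<and> active 2 x)" "\<not> (active 1 y \<and> active 2 y)" "\<not> (active 1 z \<and> active 2 z)"
    using one_block by simp_all
  with two_active[of 1] two_active[of 2] show False by blast
qed

end

section \<open>Linear relations among the third factors\<close>

context decomp6
begin

lemma no_pencil_on_three:
  assumes "\<And>s t. \<forall>c\<in>idx2. s * M1 c + t * M2 c = 0 \<Longrightarrow> s = 0 \<and> t = 0"
    and "x < 6" "y < 6" "z < 6" "x \<noteq> y" "y \<noteq> z" "x \<noteq> z"
    and "\<And>l. l < 6 \<Longrightarrow> l \<notin> {x,y,z} \<Longrightarrow> wdot l M1 = 0 \<and> wdot l M2 = 0"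
  shows False
  using three_term_pencil.three_term_pencil_impossible
    [OF three_term_pencil.intro[OF decomp6_axioms three_term_pencil_axioms.intro[OF assms]]] .

definition w_indep :: "nat set \<Rightarrow> bool" where
  "w_indep A \<longleftrightarrow> (\<forall>lam. (\<forall>c\<in>idx2. (\<Sum>l\<in>A. lam l * w l c) = 0) \<longrightarrow> (\<forall>l\<in>A. lam l = 0))"

lemma w_indepD:
  assumes "w_indep A" "\<forall>c\<in>idx2. (\<Sum>l\<in>A. lam l * w l c) = 0" "l \<in> A"
  shows "lam l = 0"
  using assms unfolding w_indep_def by blast

lemma wdot_sum: "(\<Sum>c\<in>idx2. (\<Sum>l\<in>A. lam l * w l c) * M c) = (\<Sum>l\<in>A. lam l * wdot l M)"
  unfolding wdot_def by (simp add: sum_distrib_left sum_distrib_right sum.swap[of _ idx2] mult_ac)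

lemma wdot_relation:
  assumes "\<forall>c\<in>idx2. (\<Sum>l\<in>A. lam l * w l c) = 0"
  shows "(\<Sum>l\<in>A. lam l * wdot l M) = 0"
  using assms by (simp flip: wdot_sum)

text \<open>A dependency among at most three w l gives a two-dimensional space of matrices annihilated
  by them, hence by all but three terms.\<close>

lemma w_indep_card_le3:
  assumes "A \<subseteq> {..<6}" "card A \<le> 3"
  shows "w_indep A"
  unfolding w_indep_def
proof (intro allI impI ballI)
  fix lam e assume rel: "\<forall>c\<in>idx2. (\<Sum>l\<in>A. lam l * w l c) = 0" and e: "e \<in> A"
  show "lam e = 0"
  proof (rule ccontr)
    assume lam_e: "lam e \<noteq> 0"
    obtain K where K: "A \<subseteq> K" "K \<subseteq> {..<6}" "card K = 3"
      by (rule superset_with_card[of "{..<6::nat}" A 3]) (use assms in auto)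
    have finK: "finite K" using K(2) finite_subset by blast
    have "card (K - {e}) \<le> 2" using K e finK by (simp add: card_Diff_singleton subsetD)
    then have "\<exists>M1 M2. (\<forall>s t. (\<forall>c\<in>idx2. s * M1 c + t * M2 c = 0) \<longrightarrow> s = 0 \<and> t = 0) \<and>
        (\<forall>l\<in>K - {e}. wdot l M1 = 0 \<and> wdot l M2 = 0)"
      using idx2_independent_pencil_in_kernel[of "K - {e}" w] finK unfolding wdot_def by simp
    then obtain M1 M2 where indep: "\<forall>s t. (\<forall>c\<in>idx2. s * M1 c + t * M2 c = 0) \<longrightarrow> s = 0 \<and> t = 0"
      and ker: "\<forall>l\<in>K - {e}. wdot l M1 = 0 \<and> wdot l M2 = 0"
      by (elim exE conjE) (rule that)
    have "wdot e M = 0" if "\<forall>l\<in>K - {e}. wdot l M = 0" for M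
    proof -
      have "(\<Sum>l\<in>A. lam l * wdot l M) = lam e * wdot e M + (\<Sum>l\<in>A - {e}. lam l * wdot l M)"
        using e finite_subset[OF K(1) finK] by (simp add: sum.remove)
      moreover have "(\<Sum>l\<in>A - {e}. lam l * wdot l M) = 0"
        using that K(1) by (intro sum.neutral) auto
      ultimately show ?thesis using wdot_relation[OF rel] lam_e by simp
    qed
    then have killed: "wdot l M1 = 0 \<and> wdot l M2 = 0" if "l \<in> K" for l
      using ker that by auto
    have "card ({..<6} - K) = 3" using K finK by (simp add: card_Diff_subset)
    then obtain x y z where xyz: "{..<6} - K = {x,y,z}" "x \<noteq> y" "y \<noteq> z" "x \<noteq> z"
      unfolding card_3_iff by (elim exE conjE) (rule that)
    have "x \<in> {..<6}" "y \<in> {..<6}" "z \<in> {..<6}" using xyz(1) by blast+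
    then show False
    proof (intro no_pencil_on_three[of M1 M2 x y z])
      fix l assume "l < 6" "l \<notin> {x,y,z}"
      then show "wdot l M1 = 0 \<and> wdot l M2 = 0" using killed xyz(1) by blast
    qed (use indep xyz(2-4) in blast)+
  qed
qed

lemma relation_support_card_ge4:
  assumes rel: "\<forall>c\<in>idx2. (\<Sum>l<6. g l * w l c) = 0" and "l0 < 6" "g l0 \<noteq> 0"
  shows "4 \<le> card {l. l < 6 \<and> g l \<noteq> 0}"
proof (rule ccontr)
  let ?S = "{l. l < 6 \<and> g l \<noteq> 0}"
  assume "\<not> 4 \<le> card ?S"
  then have "w_indep ?S" by (intro w_indep_card_le3) auto
  moreover have "\<forall>c\<in>idx2. (\<Sum>l\<in>?S. g l * w l c) = 0"
  proof
    fix c assume "c \<in> idx2"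
    have "(\<Sum>l<6. g l * w l c) = (\<Sum>l\<in>?S. g l * w l c)"
      by (intro sum.mono_neutral_right) auto
    then show "(\<Sum>l\<in>?S. g l * w l c) = 0" using rel \<open>c \<in> idx2\<close> by simp
  qed
  ultimately have "g l0 = 0" using w_indepD assms(2,3) by blast
  then show False using assms(3) by simp
qed

definition slice_unit :: "nat \<Rightarrow> nat \<Rightarrow> nat \<Rightarrow> 'a \<Rightarrow> nat \<times> nat \<Rightarrow> 'a" where
  "slice_unit j i0 k0 val c = (if c = (k0,i0) then (if j = 1 \<and> c = (1,1) then val / q else val) else 0)"

lemma slice_slice_unit:
  assumes "i \<in> {1,2}" "k \<in> {1,2}" "i0 \<in> {1,2}" "k0 \<in> {1,2}"
  shows "slice j (slice_unit j i0 k0 val) i k = (if i = i0 \<and> k = k0 then val else 0)"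
  using assms q_nonzero by (auto simp: slice_def slice_unit_def field_simps)

text \<open>Contracting the j-th block against h on the left gives a linear map onto all of F^2,
  which needs at least two terms.\<close>

lemma slice_rows_support:
  assumes "j \<in> {1,2}" "nonzero2 h"
  shows "2 \<le> card {l. l < 6 \<and> nonzero2 (\<lambda>k. v l (j,k)) \<and> dot2 h (\<lambda>i. u l (i,j)) \<noteq> 0}"
proof -
  obtain i0 where i0: "i0 \<in> {1,2}" "h i0 \<noteq> 0" using assms(2) by (auto simp: nonzero2_def)
  define T where "T M k = h 1 * slice j M 1 k + h 2 * slice j M 2 k" for M k
  have sum: "(\<Sum>l<6. wdot l M * v l (j,k) * dot2 h (\<lambda>i. u l (i,j))) = T M k" if "k \<in> {1,2}" for M k
  proof -
    have "(\<Sum>l<6. wdot l M * v l (j,k) * dot2 h (\<lambda>i. u l (i,j))) =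
        h 1 * (\<Sum>l<6. u l (1,j) * v l (j,k) * wdot l M) + h 2 * (\<Sum>l<6. u l (2,j) * v l (j,k) * wdot l M)"
      by (simp add: dot2_def sum.distrib sum_distrib_left algebra_simps)
    then show ?thesis
      unfolding T_def using contract_third_factor[of 1 k j j M] contract_third_factor[of 2 k j j M] that assms(1)
      by simp
  qed
  have "T (slice_unit j i0 1 (1 / h i0)) 1 = 1" "T (slice_unit j i0 1 (1 / h i0)) 2 = 0"
    "T (slice_unit j i0 2 (1 / h i0)) 1 = 0" "T (slice_unit j i0 2 (1 / h i0)) 2 = 1"
    using i0 unfolding T_def by (auto simp: slice_slice_unit)
  then show ?thesis
    by (intro two_terms_needed[where W = wdot and A = "\<lambda>l k. v l (j,k)"
        and B = "\<lambda>l. dot2 h (\<lambda>i. u l (i,j))" and T = T, OF sum])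
qed

lemma slice_cols_support:
  assumes "j \<in> {1,2}" "nonzero2 h"
  shows "2 \<le> card {l. l < 6 \<and> nonzero2 (\<lambda>i. u l (i,j)) \<and> dot2 (\<lambda>k. v l (j,k)) h \<noteq> 0}"
proof -
  interpret transposed: decomp6 q "\<lambda>l. v l \<circ> prod.swap" "\<lambda>l. u l \<circ> prod.swap" "\<lambda>l. w l \<circ> prod.swap"
    by (rule decomp6_transpose)
  show ?thesis using transposed.slice_rows_support[OF assms] by (simp add: dot2_commute)
qed

lemma diag_support_card_ge4:
  assumes "j \<in> {1,2}"
  shows "4 \<le> card {l. l < 6 \<and> nonzero2 (\<lambda>i. u l (i,j)) \<and> nonzero2 (\<lambda>k. v l (j,k))}"
proof (rule ccontr)
  let ?L = "{l. l < 6 \<and> nonzero2 (\<lambda>i. u l (i,j)) \<and> nonzero2 (\<lambda>k. v l (j,k))}"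
  assume "\<not> 4 \<le> card ?L"
  then have "\<exists>M. (\<exists>c\<in>idx2. M c \<noteq> 0) \<and> (\<forall>l\<in>?L. wdot l M = 0)"
    using idx2_common_kernel[of ?L w] unfolding wdot_def by simp
  then obtain M where M: "\<exists>c\<in>idx2. M c \<noteq> 0" "\<forall>l\<in>?L. wdot l M = 0"
    by (elim exE conjE) (rule that)
  have "slice j M i k = 0" if "i \<in> {1,2}" "k \<in> {1,2}" for i k
  proof -
    have "(\<Sum>l<6. u l (i,j) * v l (j,k) * wdot l M) = 0"
      using M(2) that by (intro sum.neutral) (auto simp: nonzero2_def)
    then show ?thesis using contract_third_factor[OF that assms assms] by simp
  qed
  then show False using slice_eq_0_imp_eq_0[OF assms] M(1) by blast
qed

lemma w_indep_card4_exists: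
  obtains B where "B \<subseteq> {..<6}" "card B = 4" "w_indep B"
proof -
  have "\<exists>M. (\<exists>c\<in>idx2. M c \<noteq> 0) \<and> (\<forall>l\<in>{0,1,2}. wdot l M = 0)"
    using idx2_common_kernel[of "{0::nat,1,2}" w] unfolding wdot_def by simp
  then obtain M where M: "\<exists>c\<in>idx2. M c \<noteq> 0" "\<forall>l\<in>{0,1,2}. wdot l M = 0"
    by (elim exE conjE) (rule that)
  obtain d where d: "d < 6" "wdot d M \<noteq> 0"
  proof (rule ccontr)
    assume "\<not> thesis"
    then have "\<And>l. l < 6 \<Longrightarrow> l \<noteq> 0 \<Longrightarrow> wdot l M = 0" using that by blast
    then show False using kernel_of_five_trivial[OF M(1), of 0] by simp
  qed
  have d012: "d \<notin> {0,1,2}" using d(2) M(2) by blast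
  have "w_indep {0,1,2,d}" unfolding w_indep_def
  proof (intro allI impI ballI)
    fix lam l assume rel: "\<forall>c\<in>idx2. (\<Sum>l\<in>{0,1,2,d}. lam l * w l c) = 0" and l: "l \<in> {0,1,2,d}"
    have "(\<Sum>l\<in>{0,1,2,d}. lam l * wdot l M) = 0" by (rule wdot_relation[OF rel])
    then have "lam d = 0" using M(2) d(2) d012 by simp
    then have "\<forall>c\<in>idx2. (\<Sum>l\<in>{0,1,2}. lam l * w l c) = 0" using rel d012 by simp
    moreover have "w_indep {0::nat,1,2}" by (rule w_indep_card_le3) auto
    ultimately have "\<forall>l\<in>{0,1,2}. lam l = 0" using w_indepD by blast
    then show "lam l = 0" using l \<open>lam d = 0\<close> by auto
  qed
  moreover have "{0,1,2,d} \<subseteq> {..<6}" "card {0,1,2,d} = 4" using d(1) d012 by auto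
  ultimately show ?thesis using that by blast
qed

lemma w_relation_through:
  assumes "w_indep B" "B \<subseteq> {..<6}" "card B = 4" "e < 6" "e \<notin> B"
  shows "\<exists>a. a e = 1 \<and> (\<forall>l. l \<notin> insert e B \<longrightarrow> a l = 0) \<and> (\<forall>c\<in>idx2. (\<Sum>l<6. a l * w l c) = 0)"
proof -
  have finB: "finite B" using assms(2) finite_subset by blast
  then have "\<exists>lam. (\<exists>l\<in>insert e B. lam l \<noteq> 0) \<and> (\<forall>c\<in>idx2. (\<Sum>l\<in>insert e B. lam l * w l c) = 0)"
    using idx2_vectors_dependent[of "insert e B" w] assms(3,5) by simp
  then obtain lam where nz: "\<exists>l\<in>insert e B. lam l \<noteq> 0"
    and rel: "\<forall>c\<in>idx2. (\<Sum>l\<in>insert e B. lam l * w l c) = 0"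
    by (elim exE conjE) (rule that)
  have rel_e: "lam e * w e c + (\<Sum>l\<in>B. lam l * w l c) = 0" if "c \<in> idx2" for c
    using rel that finB assms(5) by simp
  have "lam e \<noteq> 0"
  proof
    assume "lam e = 0"
    then have "\<forall>l\<in>B. lam l = 0" using rel_e w_indepD[OF assms(1)] by simp
    then show False using nz \<open>lam e = 0\<close> by auto
  qed
  define a where "a l = (if l \<in> insert e B then lam l / lam e else 0)" for l
  have "(\<Sum>l<6. a l * w l c) = (\<Sum>l\<in>insert e B. lam l * w l c) / lam e" for c
  proof -
    have "(\<Sum>l<6. a l * w l c) = (\<Sum>l\<in>insert e B. a l * w l c)"
      using assms(2,4) by (intro sum.mono_neutral_right) (auto simp: a_def)
    also have "\<dots> = (\<Sum>l\<in>insert e B. lam l * w l c) / lam e"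
      unfolding a_def by (simp add: sum_divide_distrib)
    finally show ?thesis .
  qed
  then show ?thesis using rel \<open>lam e \<noteq> 0\<close> by (intro exI[of _ a]) (simp add: a_def)
qed

lemma w_relation_decompose:
  assumes "w_indep B" "B \<subseteq> {..<6}" "{..<6} - B = {e,f}"
    and rel_a: "\<forall>c\<in>idx2. (\<Sum>l<6. a l * w l c) = 0" and rel_b: "\<forall>c\<in>idx2. (\<Sum>l<6. b l * w l c) = 0"
    and "a e = 1" "a f = 0" "b e = 0" "b f = 1"
    and rel: "\<forall>c\<in>idx2. (\<Sum>l<6. g l * w l c) = 0" and "l < 6"
  shows "g l = g e * a l + g f * b l"
proof -
  define r where "r l = g l - g e * a l - g f * b l" for l
  have "r e = 0" "r f = 0" using assms(6-9) by (simp_all add: r_def)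
  have "(\<Sum>l\<in>B. r l * w l c) = 0" if "c \<in> idx2" for c
  proof -
    have "(\<Sum>l\<in>B. r l * w l c) = (\<Sum>l<6. r l * w l c)"
      using assms(2,3) \<open>r e = 0\<close> \<open>r f = 0\<close> by (intro sum.mono_neutral_left) auto
    also have "\<dots> = (\<Sum>l<6. g l * w l c - g e * (a l * w l c) - g f * (b l * w l c))"
      by (simp add: r_def algebra_simps)
    also have "\<dots> = (\<Sum>l<6. g l * w l c) - g e * (\<Sum>l<6. a l * w l c) - g f * (\<Sum>l<6. b l * w l c)"
      by (simp only: sum_subtractf sum_distrib_left)
    finally show ?thesis using rel rel_a rel_b that by simp
  qed
  then have "r l = 0" if "l \<in> B" for l
    by (intro w_indepD[OF assms(1) _ that]) blast
  moreover have "l \<in> B \<or> l = e \<or> l = f" using \<open>l < 6\<close> assms(3) by auto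
  ultimately have "r l = 0" using \<open>r e = 0\<close> \<open>r f = 0\<close> by auto
  then show ?thesis by (simp add: r_def algebra_simps)
qed

lemma w_relations_basis:
  assumes "w_indep B" "B \<subseteq> {..<6}" "card B = 4"
  obtains e f a b where "e < 6" "f < 6" "e \<noteq> f" "a e = 1" "b f = 1"
    "\<forall>c\<in>idx2. (\<Sum>l<6. a l * w l c) = 0" "\<forall>c\<in>idx2. (\<Sum>l<6. b l * w l c) = 0"
    "\<And>g l. \<forall>c\<in>idx2. (\<Sum>l<6. g l * w l c) = 0 \<Longrightarrow> l < 6 \<Longrightarrow> g l = g e * a l + g f * b l"
proof -
  have "finite B" using assms(2) finite_subset by blast
  then have "card ({..<6} - B) = 2" using assms(2,3) by (simp add: card_Diff_subset)
  then obtain e f where ef: "{..<6} - B = {e,f}" "e \<noteq> f"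
    unfolding card_2_iff by (elim exE conjE) (rule that)
  then have efB: "e < 6" "f < 6" "e \<notin> B" "f \<notin> B" by blast+
  have "\<exists>a. a e = 1 \<and> (\<forall>l. l \<notin> insert e B \<longrightarrow> a l = 0) \<and> (\<forall>c\<in>idx2. (\<Sum>l<6. a l * w l c) = 0)"
    by (rule w_relation_through[OF assms efB(1,3)])
  then obtain a where a: "a e = 1" "\<forall>l. l \<notin> insert e B \<longrightarrow> a l = 0"
      "\<forall>c\<in>idx2. (\<Sum>l<6. a l * w l c) = 0"
    by (elim exE conjE) (rule that)
  have "\<exists>b. b f = 1 \<and> (\<forall>l. l \<notin> insert f B \<longrightarrow> b l = 0) \<and> (\<forall>c\<in>idx2. (\<Sum>l<6. b l * w l c) = 0)"
    by (rule w_relation_through[OF assms efB(2,4)])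
  then obtain b where b: "b f = 1" "\<forall>l. l \<notin> insert f B \<longrightarrow> b l = 0"
      "\<forall>c\<in>idx2. (\<Sum>l<6. b l * w l c) = 0"
    by (elim exE conjE) (rule that)
  have "a f = 0" "b e = 0" using a(2) b(2) ef(2) efB(3,4) by auto
  then show ?thesis
    by (rule that[OF efB(1,2) ef(2) a(1) b(1) a(3) b(3) w_relation_decompose[OF assms(1,2) ef(1) a(3) b(3)
          a(1) _ _ b(1)]])
qed
end

section \<open>Terms contributing to an off-diagonal block\<close>

text \<open>Term l contributes the rank one matrix with entries R l i * C l k to an off-diagonal block
  (j,j') of the contraction, with R l i = u l (i,j) and C l k = v l (j',k); the vectors R' l and C' l
  are u l (-,j') and v l (j,-), which enter the diagonal blocks j' and j.\<close>

locale offdiag_family = decomp6 +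
  fixes R C R' C' :: "nat \<Rightarrow> nat \<Rightarrow> 'a"
  assumes offdiag_relation:
      "\<And>i k c. i \<in> {1,2} \<Longrightarrow> k \<in> {1,2} \<Longrightarrow> c \<in> idx2 \<Longrightarrow> (\<Sum>l<6. R l i * C l k * w l c) = 0"
    and support_R: "\<And>h. nonzero2 h \<Longrightarrow> 2 \<le> card {l. l < 6 \<and> nonzero2 (C' l) \<and> dot2 h (R l) \<noteq> 0}"
    and support_C: "\<And>h. nonzero2 h \<Longrightarrow> 2 \<le> card {l. l < 6 \<and> nonzero2 (R' l) \<and> dot2 (C l) h \<noteq> 0}"
begin

definition N :: "nat set" where
  "N = {l. l < 6 \<and> nonzero2 (R l) \<and> nonzero2 (C l)}"

lemma N_subset: "N \<subseteq> {..<6}"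
  unfolding N_def by auto

lemma finite_N: "finite N"
  using N_subset finite_subset by blast

lemma offdiag_relation_N:
  assumes "i \<in> {1,2}" "k \<in> {1,2}" "c \<in> idx2"
  shows "(\<Sum>l\<in>N. R l i * C l k * w l c) = 0"
proof -
  have "(\<Sum>l<6. R l i * C l k * w l c) = (\<Sum>l\<in>N. R l i * C l k * w l c)"
    using N_subset assms(1,2) by (intro sum.mono_neutral_right) (auto simp: N_def nonzero2_def)
  then show ?thesis using offdiag_relation[OF assms] by simp
qed

lemma N_card_ge4:
  assumes "e \<in> N"
  shows "4 \<le> card N"
proof -
  obtain i0 k0 where ik: "i0 \<in> {1,2}" "k0 \<in> {1,2}" "R e i0 \<noteq> 0" "C e k0 \<noteq> 0"
    using assms unfolding N_def nonzero2_def by auto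
  have "4 \<le> card {l. l < 6 \<and> R l i0 * C l k0 \<noteq> 0}"
    using relation_support_card_ge4[of "\<lambda>l. R l i0 * C l k0" e] offdiag_relation[OF ik(1,2)] ik(3,4)
      N_subset assms by auto
  also have "\<dots> \<le> card N"
    using finite_N ik(1,2) by (intro card_mono) (auto simp: N_def nonzero2_def)
  finally show ?thesis .
qed

text \<open>If all the rank one matrices R l C l, l in N, are proportional, a vector h orthogonal to
  R e kills every R l with l in N, so the two terms guaranteed by support_R lie outside N; likewise
  for support_C. Together with N this needs more than six terms.\<close>

lemma parallel_impossible:
  assumes e: "e \<in> N" and "4 \<le> card N"
    and parallel: "\<And>l i k. l \<in> N \<Longrightarrow> i \<in> {1,2} \<Longrightarrow> k \<in> {1,2} \<Longrightarrow> R l i * C l k = c l * (R e i * C e k)"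
  shows False
proof -
  define h where "h i = (if i = 1 then R e 2 else - R e 1)" for i :: nat
  define \<kappa> where "\<kappa> k = (if k = 1 then C e 2 else - C e 1)" for k :: nat
  have nz: "nonzero2 (R e)" "nonzero2 (C e)" using e unfolding N_def by auto
  have h: "nonzero2 h" "dot2 h (R e) = 0" and \<kappa>: "nonzero2 \<kappa>" "dot2 \<kappa> (C e) = 0"
    using orthogonal2_exists[OF nz(1)] orthogonal2_exists[OF nz(2)] unfolding h_def \<kappa>_def by simp_all
  have hN: "dot2 h (R l) = 0" if "l \<in> N" for l
    by (rule dot2_eq_0_from_rank_one_combination[where B = "C l" and a = "c l" and Y = "C e"
          and b = 0 and Y' = "C e", OF _ h(2) h(2)])
      (use parallel[OF that] that in \<open>auto simp: N_def\<close>)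
  have \<kappa>N: "dot2 (C l) \<kappa> = 0" if "l \<in> N" for l
  proof -
    have "dot2 \<kappa> (C l) = 0"
      by (rule dot2_eq_0_from_rank_one_combination[where B = "R l" and a = "c l" and Y = "R e"
            and b = 0 and Y' = "R e", OF _ \<kappa>(2) \<kappa>(2)])
        (use parallel[OF that] that in \<open>auto simp: N_def mult.commute\<close>)
    then show ?thesis by (simp add: dot2_commute)
  qed
  let ?S1 = "{l. l < 6 \<and> nonzero2 (C' l) \<and> dot2 h (R l) \<noteq> 0}"
  let ?S2 = "{l. l < 6 \<and> nonzero2 (R' l) \<and> dot2 (C l) \<kappa> \<noteq> 0}"
  have "N \<inter> ?S1 = {}" "N \<inter> ?S2 = {}" using hN \<kappa>N by auto
  moreover have "?S1 \<inter> ?S2 = {}"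
    using \<open>N \<inter> ?S1 = {}\<close> dot2_neq_0_imp_nonzero2 unfolding N_def by blast
  ultimately have "card N + card ?S1 + card ?S2 \<le> 6"
    using N_subset by (intro card_disjoint3_le) auto
  then show False using support_R[OF h(1)] support_C[OF \<kappa>(1)] assms(2) by simp
qed

lemma remove_one_dependent:
  assumes e: "e \<in> N" and "4 \<le> card N"
  shows "\<not> w_indep (N - {e})"
proof
  assume indep: "w_indep (N - {e})"
  obtain i0 k0 where ik: "i0 \<in> {1,2}" "k0 \<in> {1,2}" "R e i0 \<noteq> 0" "C e k0 \<noteq> 0"
    using e unfolding N_def nonzero2_def by auto
  define q0 where "q0 = R e i0 * C e k0"
  have "q0 \<noteq> 0" using ik unfolding q0_def by simp
  have parallel: "R l i * C l k = (R l i0 * C l k0 / q0) * (R e i * C e k)"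
    if l: "l \<in> N" and ik': "i \<in> {1,2}" "k \<in> {1,2}" for l i k
  proof (cases "l = e")
    case True
    then show ?thesis using \<open>q0 \<noteq> 0\<close> unfolding q0_def by simp
  next
    case False
    define lam where "lam l = q0 * (R l i * C l k) - (R e i * C e k) * (R l i0 * C l k0)" for l
    have "(\<Sum>l\<in>N - {e}. lam l * w l c) = 0" if "c \<in> idx2" for c
    proof -
      have "(\<Sum>l\<in>N. lam l * w l c) = q0 * (\<Sum>l\<in>N. R l i * C l k * w l c)
          - (R e i * C e k) * (\<Sum>l\<in>N. R l i0 * C l k0 * w l c)"
        unfolding lam_def by (simp add: sum_distrib_left sum_subtractf algebra_simps)
      also have "\<dots> = 0" using offdiag_relation_N ik ik' that by simp
      finally show ?thesis
        using e finite_N by (simp add: sum.remove lam_def q0_def mult.commute)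
    qed
    then have "lam l = 0" by (intro w_indepD[OF indep]) (use l False in auto)
    then show ?thesis using \<open>q0 \<noteq> 0\<close> unfolding lam_def by (simp add: field_simps)
  qed
  show False by (rule parallel_impossible[OF assms parallel])
qed

lemma combination_det_nonzero:
  assumes "e < 6" "f < 6"
    and nz: "\<And>l. l < 6 \<Longrightarrow> nonzero2 (R l) \<and> nonzero2 (C l)"
    and comb: "\<And>l i k. l < 6 \<Longrightarrow> i \<in> {1,2} \<Longrightarrow> k \<in> {1,2} \<Longrightarrow>
      R l i * C l k = a l * (R e i * C e k) + b l * (R f i * C f k)"
  shows "R e 1 * R f 2 - R e 2 * R f 1 \<noteq> 0" "C e 1 * C f 2 - C e 2 * C f 1 \<noteq> 0"
proof -
  show "R e 1 * R f 2 - R e 2 * R f 1 \<noteq> 0"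
  proof
    assume det: "R e 1 * R f 2 - R e 2 * R f 1 = 0"
    define h where "h i = (if i = 1 then R e 2 else - R e 1)" for i :: nat
    have h: "nonzero2 h" "dot2 h (R e) = 0"
      using orthogonal2_exists[of "R e"] nz[OF assms(1)] unfolding h_def by simp_all
    have hf: "dot2 h (R f) = 0" using det unfolding h_def dot2_def by (simp add: algebra_simps)
    have "dot2 h (R l) = 0" if "l < 6" for l
      by (rule dot2_eq_0_from_rank_one_combination[where B = "C l" and a = "a l" and Y = "C e"
            and b = "b l" and Y' = "C f", OF _ h(2) hf]) (use comb[OF that] nz[OF that] in auto)
    then have empty: "{l. l < 6 \<and> nonzero2 (C' l) \<and> dot2 h (R l) \<noteq> 0} = {}" by auto
    show False using support_R[OF h(1)] unfolding empty by simp
  qed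
  show "C e 1 * C f 2 - C e 2 * C f 1 \<noteq> 0"
  proof
    assume det: "C e 1 * C f 2 - C e 2 * C f 1 = 0"
    define \<kappa> where "\<kappa> k = (if k = 1 then C e 2 else - C e 1)" for k :: nat
    have \<kappa>: "nonzero2 \<kappa>" "dot2 \<kappa> (C e) = 0"
      using orthogonal2_exists[of "C e"] nz[OF assms(1)] unfolding \<kappa>_def by simp_all
    have \<kappa>f: "dot2 \<kappa> (C f) = 0" using det unfolding \<kappa>_def dot2_def by (simp add: algebra_simps)
    have "dot2 \<kappa> (C l) = 0" if "l < 6" for l
      by (rule dot2_eq_0_from_rank_one_combination[where B = "R l" and a = "a l" and Y = "R e"
            and b = "b l" and Y' = "R f", OF _ \<kappa>(2) \<kappa>f])
        (use comb[OF that] nz[OF that] in \<open>auto simp: mult.commute\<close>)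
    then have empty: "{l. l < 6 \<and> nonzero2 (R' l) \<and> dot2 (C l) \<kappa> \<noteq> 0} = {}"
      by (auto simp: dot2_commute)
    show False using support_C[OF \<kappa>(1)] unfolding empty by simp
  qed
qed

text \<open>With all six terms in N, the relations among the w l form a two-dimensional space spanned by
  a and b, and every matrix R l C l is the corresponding combination of R e C e and R f C f. Since
  these have independent factors, each R l C l has rank one only if a l b l = 0; so the supports
  of a and b are disjoint, yet each needs four terms.\<close>

lemma N_card_ne_6: "card N \<noteq> 6"
proof
  assume "card N = 6"
  then have "N = {..<6}" using N_subset by (intro card_subset_eq) auto
  then have nz: "nonzero2 (R l) \<and> nonzero2 (C l)" if "l < 6" for l
    using that unfolding N_def by auto
  obtain B where B: "B \<subseteq> {..<6}" "card B = 4" "w_indep B"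
    by (rule w_indep_card4_exists)
  obtain e f a b where ef: "e < 6" "f < 6" "e \<noteq> f" and ab: "a e = 1" "b f = 1"
    and rel: "\<forall>c\<in>idx2. (\<Sum>l<6. a l * w l c) = 0" "\<forall>c\<in>idx2. (\<Sum>l<6. b l * w l c) = 0"
    and span: "\<And>g l. \<forall>c\<in>idx2. (\<Sum>l<6. g l * w l c) = 0 \<Longrightarrow> l < 6 \<Longrightarrow> g l = g e * a l + g f * b l"
    by (rule w_relations_basis[OF B(3,1,2)]) (rule that)
  have comb: "R l i * C l k = a l * (R e i * C e k) + b l * (R f i * C f k)"
    if "l < 6" "i \<in> {1,2}" "k \<in> {1,2}" for l i k
    using span[of "\<lambda>l. R l i * C l k" l] offdiag_relation[OF that(2,3)] that(1) by (simp add: mult_ac)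
  note det = combination_det_nonzero[OF ef(1,2) nz comb]
  have "a l * b l = 0" if "l < 6" for l
  proof -
    have "(R l 1 * C l 1) * (R l 2 * C l 2) - (R l 1 * C l 2) * (R l 2 * C l 1) =
        a l * b l * ((R e 1 * R f 2 - R e 2 * R f 1) * (C e 1 * C f 2 - C e 2 * C f 1))"
      by (rule det2_rank_one_combination[where P = "\<lambda>i k. R l i * C l k"]) (rule comb[OF that])
    moreover have "(R l 1 * C l 1) * (R l 2 * C l 2) - (R l 1 * C l 2) * (R l 2 * C l 1) = 0"
      by (simp add: algebra_simps)
    ultimately show ?thesis using det by simp
  qed
  then have "{l. l < 6 \<and> a l \<noteq> 0} \<inter> {l. l < 6 \<and> b l \<noteq> 0} = {}" by auto
  then have "card {l. l < 6 \<and> a l \<noteq> 0} + card {l. l < 6 \<and> b l \<noteq> 0} + card ({} :: nat set) \<le> 6"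
    using card_disjoint3_le[of "{l. l < 6 \<and> a l \<noteq> 0}" 6 "{l. l < 6 \<and> b l \<noteq> 0}" "{}"] by auto
  moreover have "4 \<le> card {l. l < 6 \<and> a l \<noteq> 0}" "4 \<le> card {l. l < 6 \<and> b l \<noteq> 0}"
    using relation_support_card_ge4[OF rel(1) ef(1)] relation_support_card_ge4[OF rel(2) ef(2)] ab
    by simp_all
  ultimately show False by simp
qed

lemma N_card_eq_5:
  assumes "e \<in> N"
  shows "card N = 5"
proof -
  have "card N \<noteq> 4"
  proof
    assume "card N = 4"
    then have "w_indep (N - {e})"
      using assms N_subset finite_N by (intro w_indep_card_le3) auto
    then show False using remove_one_dependent[OF assms] \<open>card N = 4\<close> by simp
  qed
  moreover have "card N \<le> 6" using card_mono[OF _ N_subset] by simp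
  ultimately show ?thesis using N_card_ge4[OF assms] N_card_ne_6 by linarith
qed

text \<open>In a five-element N every four elements are dependent while every three are independent,
  so a matrix annihilated by three w l with l in N is annihilated by all of them.\<close>

lemma N_kernel_closed:
  assumes l123: "l1 \<in> N" "l2 \<in> N" "l3 \<in> N" "l1 \<noteq> l2" "l2 \<noteq> l3" "l1 \<noteq> l3"
    and M: "wdot l1 M = 0" "wdot l2 M = 0" "wdot l3 M = 0" and l: "l \<in> N"
  shows "wdot l M = 0"
proof (cases "l \<in> {l1,l2,l3}")
  case True
  then show ?thesis using M by auto
next
  case False
  let ?S = "{l1,l2,l3,l}"
  have S: "?S \<subseteq> N" "card ?S = 4" using l123 l False by auto
  then have "card (N - ?S) = 1"
    using N_card_eq_5[OF l] finite_N by (simp add: card_Diff_subset finite_subset)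
  then obtain e where e: "N - ?S = {e}" by (rule card_1_singletonE)
  then have "e \<in> N" "N - {e} = ?S" using S(1) by auto
  moreover have "4 \<le> card N" using N_card_eq_5[OF l] by simp
  ultimately have "\<not> w_indep ?S"
    using remove_one_dependent by metis
  then have "\<exists>lam. (\<forall>c\<in>idx2. (\<Sum>l'\<in>?S. lam l' * w l' c) = 0) \<and> (\<exists>l'\<in>?S. lam l' \<noteq> 0)"
    unfolding w_indep_def by simp
  then obtain lam where rel: "\<forall>c\<in>idx2. (\<Sum>l'\<in>?S. lam l' * w l' c) = 0"
    and nz: "\<exists>l'\<in>?S. lam l' \<noteq> 0"
    by (elim exE conjE) (rule that)
  have sum_S: "(\<Sum>l'\<in>?S. g l') = g l1 + g l2 + g l3 + g l" for g :: "nat \<Rightarrow> 'a"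
    using l123 False by (simp add: add_ac)
  have "lam l \<noteq> 0"
  proof
    assume "lam l = 0"
    then have "\<forall>c\<in>idx2. (\<Sum>l'\<in>{l1,l2,l3}. lam l' * w l' c) = 0"
      using rel l123 by (simp add: sum_S add.assoc)
    moreover have "w_indep {l1,l2,l3}" using l123 N_subset by (intro w_indep_card_le3) auto
    ultimately have "lam l1 = 0" "lam l2 = 0" "lam l3 = 0" using w_indepD by blast+
    then show False using nz \<open>lam l = 0\<close> by auto
  qed
  moreover have "(\<Sum>l'\<in>?S. lam l' * wdot l' M) = 0" by (rule wdot_relation[OF rel])
  ultimately show ?thesis using M by (simp add: sum_S)
qed

end

context decomp6
begin

text \<open>Two five-element sets of terms share three terms; a matrix annihilated by their three w l
  is annihilated by all terms of both sets, which leaves at most one term.\<close>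

lemma two_closed_supports_impossible:
  assumes "A \<subseteq> {..<6}" "B \<subseteq> {..<6}" "card A = 5" "card B = 5"
    and closed_A: "\<And>l1 l2 l3 M l. l1 \<in> A \<Longrightarrow> l2 \<in> A \<Longrightarrow> l3 \<in> A \<Longrightarrow> l1 \<noteq> l2 \<Longrightarrow> l2 \<noteq> l3 \<Longrightarrow>
      l1 \<noteq> l3 \<Longrightarrow> wdot l1 M = 0 \<Longrightarrow> wdot l2 M = 0 \<Longrightarrow> wdot l3 M = 0 \<Longrightarrow> l \<in> A \<Longrightarrow> wdot l M = 0"
    and closed_B: "\<And>l1 l2 l3 M l. l1 \<in> B \<Longrightarrow> l2 \<in> B \<Longrightarrow> l3 \<in> B \<Longrightarrow> l1 \<noteq> l2 \<Longrightarrow> l2 \<noteq> l3 \<Longrightarrow>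
      l1 \<noteq> l3 \<Longrightarrow> wdot l1 M = 0 \<Longrightarrow> wdot l2 M = 0 \<Longrightarrow> wdot l3 M = 0 \<Longrightarrow> l \<in> B \<Longrightarrow> wdot l M = 0"
  shows False
proof -
  have fin: "finite A" "finite B" using assms(1,2) finite_subset by blast+
  have union: "A \<union> B \<subseteq> {..<6}" using assms(1,2) by blast
  then have "card (A \<union> B) \<le> 6" using card_mono[OF _ union] by simp
  then have "3 \<le> card (A \<inter> B)" using card_Un_Int[OF fin] assms(3,4) by simp
  then obtain T where T: "T \<subseteq> A \<inter> B" "card T = 3"
    by (rule obtain_subset_with_card_n)
  then obtain l1 l2 l3 where l123: "T = {l1,l2,l3}" "l1 \<noteq> l2" "l2 \<noteq> l3" "l1 \<noteq> l3"
    unfolding card_3_iff by (elim exE conjE) (rule that)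
  have "\<exists>M. (\<exists>c\<in>idx2. M c \<noteq> 0) \<and> (\<forall>l\<in>{l1,l2,l3}. wdot l M = 0)"
    using idx2_common_kernel[of "{l1,l2,l3}" w] unfolding wdot_def by (simp add: card_insert_if)
  then obtain M where M: "\<exists>c\<in>idx2. M c \<noteq> 0" "\<forall>l\<in>{l1,l2,l3}. wdot l M = 0"
    by (elim exE conjE) (rule that)
  have killed: "wdot l M = 0" if "l \<in> A \<union> B" for l
    using that closed_A[of l1 l2 l3 M l] closed_B[of l1 l2 l3 M l] T(1) l123 M(2) by auto
  have "6 \<le> Suc (card (A \<union> B))"
    using card_mono[OF _ Un_upper1, of A B] fin assms(3) by simp
  then obtain f where f: "f < 6" "\<And>l. l < 6 \<Longrightarrow> l \<noteq> f \<Longrightarrow> l \<in> A \<union> B"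
    by (rule all_but_one_in[OF union]) (simp, rule that)
  show False
    by (rule kernel_of_five_trivial[OF M(1) f(1)]) (use killed f(2) in blast)
qed

text \<open>A term with nonzero factors in both diagonal blocks contributes to both off-diagonal blocks,
  so both supports are nonempty and hence have five elements.\<close>

lemma decomp6_impossible: False
proof -
  interpret block12: offdiag_family q u v w "\<lambda>l i. u l (i,1)" "\<lambda>l k. v l (2,k)" "\<lambda>l i. u l (i,2)"
      "\<lambda>l k. v l (1,k)"
  proof unfold_locales
    show "(\<Sum>l<6. u l (i,1) * v l (2,k) * w l c) = 0" if "i \<in> {1,2}" "k \<in> {1,2}" "c \<in> idx2" for i k c
      using offdiag_terms_cancel[of i k 1 2 c] that by simp
  qed (use slice_rows_support[of 1] slice_cols_support[of 2] in simp_all)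
  interpret block21: offdiag_family q u v w "\<lambda>l i. u l (i,2)" "\<lambda>l k. v l (1,k)" "\<lambda>l i. u l (i,1)"
      "\<lambda>l k. v l (2,k)"
  proof unfold_locales
    show "(\<Sum>l<6. u l (i,2) * v l (1,k) * w l c) = 0" if "i \<in> {1,2}" "k \<in> {1,2}" "c \<in> idx2" for i k c
      using offdiag_terms_cancel[of i k 2 1 c] that by simp
  qed (use slice_rows_support[of 2] slice_cols_support[of 1] in simp_all)
  let ?L1 = "{l. l < 6 \<and> nonzero2 (\<lambda>i. u l (i,1)) \<and> nonzero2 (\<lambda>k. v l (1,k))}"
  let ?L2 = "{l. l < 6 \<and> nonzero2 (\<lambda>i. u l (i,2)) \<and> nonzero2 (\<lambda>k. v l (2,k))}"
  have "?L1 \<inter> ?L2 \<noteq> {}"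
  proof
    assume "?L1 \<inter> ?L2 = {}"
    then have "card ?L1 + card ?L2 + card ({} :: nat set) \<le> 6"
      using card_disjoint3_le[of ?L1 6 ?L2 "{}"] by auto
    then show False using diag_support_card_ge4[of 1] diag_support_card_ge4[of 2] by simp
  qed
  then obtain l0 where "l0 \<in> block12.N" "l0 \<in> block21.N"
    unfolding block12.N_def block21.N_def by blast
  then show False
    by (intro two_closed_supports_impossible[OF block12.N_subset block21.N_subset
          block12.N_card_eq_5 block21.N_card_eq_5 block12.N_kernel_closed block21.N_kernel_closed])
qed

end

lemma sum_of_simple_mono:
  assumes "sum_of_simple T r" "r \<le> n"
  shows "sum_of_simple T n"
proof -
  obtain u v w where uvw: "\<forall>a\<in>idx2. \<forall>b\<in>idx2. \<forall>c\<in>idx2. T a b c = (\<Sum>l<r. u l a * v l b * w l c)"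
    using assms(1) unfolding sum_of_simple_def by (elim exE) (rule that)
  define u' where "u' l = (if l < r then u l else (\<lambda>_. 0))" for l
  have "(\<Sum>l<n. u' l a * v l b * w l c) = (\<Sum>l<r. u l a * v l b * w l c)" for a b c
  proof -
    have "(\<Sum>l<n. u' l a * v l b * w l c) = (\<Sum>l<r. u' l a * v l b * w l c)"
      using assms(2) by (intro sum.mono_neutral_right) (auto simp: u'_def)
    then show ?thesis by (simp add: u'_def)
  qed
  then show ?thesis
    using uvw unfolding sum_of_simple_def by (intro exI[of _ u'] exI[of _ v] exI[of _ w]) simp
qed

lemma sum_of_simple_16:
  fixes T :: "nat \<times> nat \<Rightarrow> nat \<times> nat \<Rightarrow> nat \<times> nat \<Rightarrow> 'a::field"
  shows "sum_of_simple T 16"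
proof -
  \<comment> \<open>l < 16 enumerates the pairs (a l, b l) of basis indices.\<close>
  define a where "a l = (l div 8 + 1, (l div 4) mod 2 + 1)" for l :: nat
  define b where "b l = ((l div 2) mod 2 + 1, l mod 2 + 1)" for l :: nat
  have sum16: "(\<Sum>l<16::nat. f l) = f 0 + f 1 + f 2 + f 3 + f 4 + f 5 + f 6 + f 7 + f 8 + f 9 + f 10 + f 11
      + f 12 + f 13 + f 14 + (f 15 :: 'a)" for f
    by (simp add: eval_nat_numeral)
  have "T x y c = (\<Sum>l<16. (if x = a l then 1 else 0) * (if y = b l then 1 else 0) * T (a l) (b l) c)"
    if "x \<in> idx2" "y \<in> idx2" for x y c
    using that unfolding sum16 idx2_def by (auto simp: a_def b_def)
  then show ?thesis
    unfolding sum_of_simple_def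
    by (intro exI[of _ "\<lambda>l x. if x = a l then 1 else 0"] exI[of _ "\<lambda>l y. if y = b l then 1 else 0"]
        exI[of _ "\<lambda>l. T (a l) (b l)"]) simp
qed

lemma mm222q_not_sum_of_6_simple:
  fixes q :: "'a::field"
  assumes "q \<noteq> 0"
  shows "\<not> sum_of_simple (mm222q q) 6"
proof
  assume "sum_of_simple (mm222q q) 6"
  then obtain u v w :: "nat \<Rightarrow> nat \<times> nat \<Rightarrow> 'a" where
    "\<forall>a\<in>idx2. \<forall>b\<in>idx2. \<forall>c\<in>idx2. mm222q q a b c = (\<Sum>l<6. u l a * v l b * w l c)"
    unfolding sum_of_simple_def by (elim exE) (rule that)
  then have "decomp6 q u v w" using assms by unfold_locales auto
  then show False by (rule decomp6.decomp6_impossible)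
qed

theorem mainTheorem4:
  fixes q :: "'a::field"
  assumes "q \<noteq> 0"
  shows "tensor_rank (mm222q q) \<ge> 7"
proof -
  have "sum_of_simple (mm222q q) (tensor_rank (mm222q q))"
    unfolding tensor_rank_def by (rule LeastI[of _ 16]) (rule sum_of_simple_16)
  then show ?thesis
    using sum_of_simple_mono[of "mm222q q" _ 6] mm222q_not_sum_of_6_simple[OF assms] by fastforce
qed

end
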